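(* Let $A\in\mathbb{R}^{n\times n}$, $B\in\mathbb{R}^{n\times m}$ with $(A,B)$ stabilizable, $Q\succ0$, $R\succ0$, $\alpha>1$, $\gamma,\eta\ge0$, $x_k\in\mathbb{R}^n$, and let $\tilde P$, $V$, $J_k$, $Z$, $H_0,H_1,H_2$ be as in the context. The optimization problem (P1): minimize over $F_k\in\mathbb{R}^{m\times n}$, $\delta_k$ the objective $-\delta_k+\gamma\|F_k\|_0+\eta\|F_kx_k\|_0$ subject to $J_k(F_k,\xi;x_k)\le\alpha\big(V(x_k)-V(x(t_k+\xi))\big)$ for all $\xi\in[0,\delta_k]$, is equivalent to the problem (P2): minimize over $f_k\in\mathbb{R}^{mn}$, $\delta_k$ the objective $-\delta_k+\gamma\|f_k\|_0+\eta\|(x_k^T\otimes I)f_k\|_0$ subject to, for all $\xi\in[0,\delta_k)$, $$\tfrac12 f_k^TP_1(\xi)f_k+q_1(\xi)^Tf_k+r_1(\xi)\le0,$$ where $f_k:=\mathrm{vec}(F_k)$ and $$P_1(\xi):=2(x_kx_k^T)\otimes\big(H_2(\xi)+\alpha B^TZ(\xi)^Te^{A^T\xi}\tilde Pe^{A\xi}Z(\xi)B\big),$$ $$q_1(\xi):=2\,\mathrm{vec}\Big(\big(H_1(\xi)^T+\alpha B^TZ(\xi)^Te^{A^T\xi}\tilde Pe^{A\xi}\big)x_kx_k^T\Big),$$ $$r_1(\xi):=x_k^T\big(H_0(\xi)+\alpha(e^{A^T\xi}\tilde Pe^{A\xi}-\tilde P)\big)x_k.$$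
   Context: $\tilde F$ is a fixed gain with $A+B\tilde F$ Hurwitz and $\tilde P\succ0$ solves $(A+B\tilde F)^T\tilde P+\tilde P(A+B\tilde F)+Q+\tilde F^TR\tilde F=0$; $V(x):=x^T\tilde Px$. For $\xi\ge0$, $x(t_k+\xi)$ is the solution of $\dot x=Ax+Bu$ from $x(t_k)=x_k$ with constant input $u=F_kx_k$, and $J_k(F_k,\xi;x_k):=\int_{t_k}^{t_k+\xi}(x^TQx+u^TRu)\,dt$. $Z(\tau):=\int_0^\tau e^{-As}ds$, $H_0(\xi):=\int_0^\xi e^{A^T\tau}Qe^{A\tau}d\tau$, $H_1(\xi):=\int_0^\xi e^{A^T\tau}Qe^{A\tau}Z(\tau)Bd\tau$, $H_2(\xi):=\int_0^\xi(e^{A\tau}Z(\tau)B)^TQ(e^{A\tau}Z(\tau)B)d\tau+\xi R$. $\|\cdot\|_0$ is the number of nonzero entries, $\mathrm{vec}$ stacks columns, $\otimes$ is the Kronecker product, and $I$ is the $m\times m$ identity. *)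

theory Defs
  imports "HOL-Analysis.Analysis"
begin

fun mpow :: "real^'n^'n \<Rightarrow> nat \<Rightarrow> real^'n^'n" where
  "mpow A 0 = mat 1"
| "mpow A (Suc k) = A ** mpow A k"

definition mexp :: "real^'n^'n \<Rightarrow> real \<Rightarrow> real^'n^'n" where
  "mexp A t = (\<Sum>k. ((t ^ k) / fact k) *\<^sub>R mpow A k)"

definition pos_def :: "real^'n^'n \<Rightarrow> bool" where
  "pos_def M \<longleftrightarrow> transpose M = M \<and> (\<forall>x. x \<noteq> 0 \<longrightarrow> x \<bullet> (M *v x) > 0)"

definition hurwitz :: "real^'n^'n \<Rightarrow> bool" where
  "hurwitz M \<longleftrightarrow> (\<forall>(l::complex) (v::complex^'n). v \<noteq> 0 \<and>
      (\<chi> i. \<Sum>j\<in>UNIV. complex_of_real (M $ i $ j) * v $ j) = l *s v \<longrightarrow> Re l < 0)"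

definition stabilizable :: "real^'n^'n \<Rightarrow> real^'m^'n \<Rightarrow> bool" where
  "stabilizable A B \<longleftrightarrow> (\<exists>F::real^'n^'m. hurwitz (A + B ** F))"

definition nnz_vec :: "real^'n \<Rightarrow> nat" where
  "nnz_vec v = card {i. v $ i \<noteq> 0}"

definition nnz_mat :: "real^'n^'m \<Rightarrow> nat" where
  "nnz_mat M = card {(i, j). M $ i $ j \<noteq> 0}"

text \<open>Column-stacking vec: index (j, i) = column j, row i (column-major order,
  the column index being the outer (slow) index).\<close>

definition vecm :: "real^'n^'m \<Rightarrow> real^('n \<times> 'm)" where
  "vecm F = (\<chi> p. F $ snd p $ fst p)"

text \<open>Kronecker product; row/column indices are pairs (outer block index, inner index),
  consistent with vecm.\<close>

definition kron :: "real^'b^'a \<Rightarrow> real^'d^'c \<Rightarrow> real^('b \<times> 'd)^('a \<times> 'c)" where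
  "kron M N = (\<chi> r. \<chi> c. M $ fst r $ fst c * N $ snd r $ snd c)"

definition outer :: "real^'n \<Rightarrow> real^'n^'n" where
  "outer x = (\<chi> i j. x $ i * x $ j)"

definition rowv :: "real^'n \<Rightarrow> real^'n^1" where
  "rowv x = (\<chi> _. x)"

definition Zm :: "real^'n^'n \<Rightarrow> real \<Rightarrow> real^'n^'n" where
  "Zm A \<tau> = integral {0..\<tau>} (\<lambda>s. mexp A (- s))"

definition H0 :: "real^'n^'n \<Rightarrow> real^'n^'n \<Rightarrow> real \<Rightarrow> real^'n^'n" where
  "H0 A Q \<xi> = integral {0..\<xi>} (\<lambda>\<tau>. mexp (transpose A) \<tau> ** Q ** mexp A \<tau>)"

definition H1 :: "real^'n^'n \<Rightarrow> real^'m^'n \<Rightarrow> real^'n^'n \<Rightarrow> real \<Rightarrow> real^'m^'n" where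
  "H1 A B Q \<xi> = integral {0..\<xi>} (\<lambda>\<tau>. mexp (transpose A) \<tau> ** Q ** mexp A \<tau> ** Zm A \<tau> ** B)"

definition H2 :: "real^'n^'n \<Rightarrow> real^'m^'n \<Rightarrow> real^'n^'n \<Rightarrow> real^'m^'m \<Rightarrow> real \<Rightarrow> real^'m^'m" where
  "H2 A B Q R \<xi> = integral {0..\<xi>}
      (\<lambda>\<tau>. transpose (mexp A \<tau> ** Zm A \<tau> ** B) ** Q ** (mexp A \<tau> ** Zm A \<tau> ** B)) + \<xi> *\<^sub>R R"

text \<open>Cost J_k(F, xi; x_k) along a given trajectory xt (time measured from t_k).\<close>

definition Jcost :: "real^'n^'n \<Rightarrow> real^'m^'m \<Rightarrow> (real \<Rightarrow> real^'n) \<Rightarrow> real^'m \<Rightarrow> real \<Rightarrow> real" where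
  "Jcost Q R xt u \<xi> = integral {0..\<xi>} (\<lambda>t. xt t \<bullet> (Q *v xt t) + u \<bullet> (R *v u))"

definition P1m :: "real^'n^'n \<Rightarrow> real^'m^'n \<Rightarrow> real^'n^'n \<Rightarrow> real^'m^'m \<Rightarrow> real^'n^'n \<Rightarrow> real
    \<Rightarrow> real^'n \<Rightarrow> real \<Rightarrow> real^('n \<times> 'm)^('n \<times> 'm)" where
  "P1m A B Q R Pt \<alpha> x \<xi> = 2 *\<^sub>R kron (outer x)
     (H2 A B Q R \<xi> + \<alpha> *\<^sub>R (transpose B ** transpose (Zm A \<xi>) ** mexp (transpose A) \<xi> ** Pt
        ** mexp A \<xi> ** Zm A \<xi> ** B))"

definition q1v :: "real^'n^'n \<Rightarrow> real^'m^'n \<Rightarrow> real^'n^'n \<Rightarrow> real^'n^'n \<Rightarrow> real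
    \<Rightarrow> real^'n \<Rightarrow> real \<Rightarrow> real^('n \<times> 'm)" where
  "q1v A B Q Pt \<alpha> x \<xi> = 2 *\<^sub>R vecm ((transpose (H1 A B Q \<xi>) + \<alpha> *\<^sub>R (transpose B ** transpose (Zm A \<xi>)
        ** mexp (transpose A) \<xi> ** Pt ** mexp A \<xi>)) ** outer x)"

definition r1 :: "real^'n^'n \<Rightarrow> real^'n^'n \<Rightarrow> real^'n^'n \<Rightarrow> real \<Rightarrow> real^'n \<Rightarrow> real \<Rightarrow> real" where
  "r1 A Q Pt \<alpha> x \<xi> = x \<bullet> ((H0 A Q \<xi> + \<alpha> *\<^sub>R (mexp (transpose A) \<xi> ** Pt ** mexp A \<xi> - Pt)) *v x)"

end

theory Submission
  imports Defs
begin

(* Under the constant input u = F x_k, variation of constants gives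
   x(t_k + xi) = e^(A xi) x_k + e^(A xi) Z(xi) B u, so both J_k and V(x(t_k + xi)) are quadratic
   in u: J_k = x_k' H0 x_k + 2 x_k' H1 u + u' H2 u.  Since u = (x_k' (x) I) vec F, the margin
   J_k - alpha (V(x_k) - V(x(t_k + xi))) is exactly the quadratic (1/2) f' P1 f + q1' f + r1 in
   f = vec F.  The margin is continuous in xi and vanishes at xi = 0, so asking it to be
   nonpositive on [0, delta] or on [0, delta) is the same.  The objectives agree because vec only
   permutes entries and (x_k' (x) I) vec F = F x_k. *)

lemma bounded_linear_vec_lambda:
  fixes f :: "'a::real_normed_vector \<Rightarrow> 'b::real_normed_vector^'n"
  assumes "\<And>i. bounded_linear (\<lambda>x. f x $ i)"
  shows "bounded_linear f"
proof -
  have "\<forall>i. \<exists>K. \<forall>x. norm (f x $ i) \<le> norm x * K"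
    using assms bounded_linear.bounded by blast
  then obtain K where K: "\<And>i x. norm (f x $ i) \<le> norm x * K i"
    unfolding choice_iff by blast
  show ?thesis
  proof (rule bounded_linear_intro[where K = "\<Sum>i\<in>UNIV. K i"])
    fix x y :: 'a and r :: real
    show "f (x + y) = f x + f y" "f (r *\<^sub>R x) = r *\<^sub>R f x"
      using linear_add[OF bounded_linear.linear[OF assms]]
        linear_scale[OF bounded_linear.linear[OF assms]]
      by (simp_all add: vec_eq_iff)
    have "norm (f x) \<le> (\<Sum>i\<in>UNIV. norm (f x $ i))"
      unfolding norm_vec_def by (rule L2_set_le_sum) simp
    also have "\<dots> \<le> (\<Sum>i\<in>UNIV. norm x * K i)"
      by (intro sum_mono K)
    finally show "norm (f x) \<le> norm x * (\<Sum>i\<in>UNIV. K i)"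
      by (simp add: sum_distrib_left)
  qed
qed

lemma bounded_linear_transpose: "bounded_linear (transpose :: real^'n^'m \<Rightarrow> real^'m^'n)"
  by (simp add: linear_conv_bounded_linear[symmetric] linear_iff transpose_def vec_eq_iff)

lemma bounded_bilinear_matrix_vector_mult:
  "bounded_bilinear ((*v) :: real^'n^'m \<Rightarrow> real^'n \<Rightarrow> real^'m)"
  by (rule bilinear_conv_bounded_bilinear[THEN iffD1])
    (auto simp: bilinear_def linear_iff algebra_simps scaleR_matrix_vector_assoc[symmetric])

lemma bounded_bilinear_matrix_mult:
  "bounded_bilinear ((**) :: real^'n^'m \<Rightarrow> real^'k^'n \<Rightarrow> real^'k^'m)"
  by (rule bilinear_conv_bounded_bilinear[THEN iffD1])
    (auto simp: bilinear_def linear_iff matrix_matrix_mult_def vec_eq_iff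
      sum.distrib sum_distrib_left algebra_simps)

lemma matrix_vector_mult_uminus_left: "(- M) *v v = - (M *v v)" for M :: "real^'n^'m"
  by (metis scaleR_matrix_vector_assoc scaleR_minus1_left)

lemma inner_transpose_matrix_vector: "(transpose M *v v) \<bullet> w = v \<bullet> (M *v w)"
  for M :: "real^'n^'m"
  by (metis dot_lmul_matrix transpose_matrix_vector)

lemma inner_matrix_vector_transpose: "v \<bullet> (transpose M *v w) = (M *v v) \<bullet> w"
  for M :: "real^'n^'m"
  by (metis inner_transpose_matrix_vector inner_commute)

lemma symmetric_matrix_inner_commute:
  fixes P :: "real^'n^'n"
  assumes "transpose P = P"
  shows "(P *v v) \<bullet> w = v \<bullet> (P *v w)"
  by (metis assms inner_transpose_matrix_vector)

lemma symmetric_quadratic_form_add: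
  fixes P :: "real^'n^'n"
  assumes "transpose P = P"
  shows "(a + b) \<bullet> (P *v (a + b)) = a \<bullet> (P *v a) + 2 * (a \<bullet> (P *v b)) + b \<bullet> (P *v b)"
  using symmetric_matrix_inner_commute[OF assms, of b a]
  by (simp add: matrix_vector_right_distrib inner_add_left inner_add_right inner_commute)

lemma has_integral_inner_matrix_vector:
  fixes h :: "real \<Rightarrow> real^'n^'m"
  assumes "continuous_on {a..b} h"
  shows "((\<lambda>t. v \<bullet> (h t *v w)) has_integral v \<bullet> (integral {a..b} h *v w)) {a..b}"
proof -
  have "bounded_linear (\<lambda>M::real^'n^'m. v \<bullet> (M *v w))"
    by (intro bounded_linear_compose[OF bounded_linear_inner_right]
        bounded_bilinear.bounded_linear_left[OF bounded_bilinear_matrix_vector_mult])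
  from has_integral_linear[OF integrable_integral[OF integrable_continuous_interval[OF assms]] this]
  show ?thesis by (simp add: o_def)
qed

lemma sum_UNIV_prod: "(\<Sum>p\<in>UNIV. f p) = (\<Sum>a\<in>UNIV. \<Sum>b\<in>UNIV. f (a, b))"
  for f :: "'a::finite \<times> 'b::finite \<Rightarrow> 'c::comm_monoid_add"
  using sum.cartesian_product[of "\<lambda>a b. f (a, b)" UNIV UNIV] by (simp add: UNIV_Times_UNIV)

lemma nonpos_on_atLeastAtMost_iff_atLeastLessThan:
  fixes g :: "real \<Rightarrow> real"
  assumes g: "continuous_on {a..b} g" and "g a \<le> 0"
  shows "(\<forall>x\<in>{a..b}. g x \<le> 0) \<longleftrightarrow> (\<forall>x\<in>{a..<b}. g x \<le> 0)"
proof
  assume nonpos: "\<forall>x\<in>{a..<b}. g x \<le> 0"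
  show "\<forall>x\<in>{a..b}. g x \<le> 0"
  proof (cases "a < b")
    case True
    then have "closure {a..<b} = {a..b}"
      by simp
    then show ?thesis
      using continuous_le_on_closure[of "{a..<b}" g _ 0] g nonpos by auto
  next
    case False
    then have "{a..b} \<subseteq> {a}"
      by auto
    then show ?thesis
      using \<open>g a \<le> 0\<close> by auto
  qed
qed auto

lemma continuous_on_if_has_vector_derivative:
  assumes "\<And>t. t \<ge> a \<Longrightarrow> (f has_vector_derivative f' t) (at t within {a..})"
  shows "continuous_on {a..b} f"
proof -
  have "continuous (at t within {a..}) f" if "t \<ge> a" for t
    using assms[OF that] by (rule has_vector_derivative_continuous)
  then have "continuous_on {a..} f"
    by (simp add: continuous_on_eq_continuous_within)
  then show ?thesis
    by (rule continuous_on_subset) auto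
qed

section \<open>The matrix exponential\<close>

(* The library's exp needs a Banach algebra; square matrices are not given that structure, but the
   bounded endomorphisms 'a =>L 'a under composition are, once wrapped in a type of their own.
   The matrix exponential is then exp transported back along matrix_of_endo. *)

typedef (overloaded) 'a endo = "UNIV :: ('a::euclidean_space \<Rightarrow>\<^sub>L 'a) set" ..

setup_lifting type_definition_endo

instantiation endo :: (euclidean_space) real_normed_vector
begin

lift_definition norm_endo :: "'a endo \<Rightarrow> real" is norm .
lift_definition minus_endo :: "'a endo \<Rightarrow> 'a endo \<Rightarrow> 'a endo" is "(-)" .
lift_definition plus_endo :: "'a endo \<Rightarrow> 'a endo \<Rightarrow> 'a endo" is "(+)" .
lift_definition uminus_endo :: "'a endo \<Rightarrow> 'a endo" is uminus .
lift_definition zero_endo :: "'a endo" is 0 .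
lift_definition scaleR_endo :: "real \<Rightarrow> 'a endo \<Rightarrow> 'a endo" is scaleR .

definition dist_endo :: "'a endo \<Rightarrow> 'a endo \<Rightarrow> real"
  where "dist_endo a b = norm (a - b)"

definition uniformity_endo :: "('a endo \<times> 'a endo) filter"
  where "uniformity_endo = (INF e\<in>{0<..}. principal {(x, y). dist x y < e})"

definition open_endo :: "'a endo set \<Rightarrow> bool"
  where "open_endo S = (\<forall>x\<in>S. \<forall>\<^sub>F (x', y) in uniformity. x' = x \<longrightarrow> y \<in> S)"

definition sgn_endo :: "'a endo \<Rightarrow> 'a endo"
  where "sgn_endo x = scaleR (inverse (norm x)) x"

instance
  apply standard
  unfolding dist_endo_def open_endo_def sgn_endo_def uniformity_endo_def
  apply (rule refl | (transfer, force simp: algebra_simps norm_triangle_ineq))+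
  done

end

instantiation endo :: (euclidean_space) real_normed_algebra_1
begin

lift_definition times_endo :: "'a endo \<Rightarrow> 'a endo \<Rightarrow> 'a endo" is blinfun_compose .
lift_definition one_endo :: "'a endo" is id_blinfun .

instance
proof
  show "(0::'a endo) \<noteq> 1"
  proof transfer
    obtain b :: 'a where "b \<in> Basis" using nonempty_Basis by blast
    then have "b \<noteq> 0" by auto
    then show "(0::'a \<Rightarrow>\<^sub>L 'a) \<noteq> id_blinfun"
      by (metis blinfun_apply_id_blinfun blinfun.zero_left)
  qed
  show "norm (1::'a endo) = 1" by transfer simp
qed (transfer; auto intro!: blinfun_eqI simp: blinfun.bilinear_simps norm_blinfun_compose)+

end

lemma bounded_linear_Rep_endo: "bounded_linear Rep_endo"
  by (rule bounded_linear_intro[where K = 1])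
    (simp_all add: plus_endo.rep_eq scaleR_endo.rep_eq norm_endo.rep_eq)

instance endo :: (euclidean_space) banach
proof
  fix X :: "nat \<Rightarrow> 'a endo"
  assume "Cauchy X"
  then have "Cauchy (\<lambda>n. Rep_endo (X n))"
    unfolding Cauchy_def dist_norm dist_endo_def
    by (metis minus_endo.rep_eq norm_endo.rep_eq)
  then obtain L where "(\<lambda>n. Rep_endo (X n)) \<longlonglongrightarrow> L"
    using Cauchy_convergent_iff convergent_def by blast
  then have "X \<longlonglongrightarrow> Abs_endo L"
    unfolding tendsto_iff dist_norm dist_endo_def
    by (simp add: norm_endo.rep_eq minus_endo.rep_eq Abs_endo_inverse)
  then show "convergent X" by (auto simp: convergent_def)
qed

definition endo_of_matrix :: "real^'n^'n \<Rightarrow> (real^'n) endo"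
  where "endo_of_matrix M = Abs_endo (Blinfun ((*v) M))"

definition matrix_of_endo :: "(real^'n) endo \<Rightarrow> real^'n^'n"
  where "matrix_of_endo L = matrix (blinfun_apply (Rep_endo L))"

lemma matrix_of_endo_of_matrix [simp]: "matrix_of_endo (endo_of_matrix M) = M"
  by (simp add: matrix_of_endo_def endo_of_matrix_def Abs_endo_inverse
      bounded_linear_Blinfun_apply)

lemma matrix_of_endo_mult: "matrix_of_endo (a * b) = matrix_of_endo a ** matrix_of_endo b"
proof -
  have "blinfun_apply (Rep_endo (a * b)) = blinfun_apply (Rep_endo a) \<circ> blinfun_apply (Rep_endo b)"
    by (simp add: times_endo.rep_eq fun_eq_iff)
  then show ?thesis
    by (simp add: matrix_of_endo_def matrix_compose
        bounded_linear.linear[OF blinfun.bounded_linear_right])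
qed

lemma matrix_of_endo_one: "matrix_of_endo 1 = mat 1"
  by (simp add: matrix_of_endo_def one_endo.rep_eq matrix_id_mat_1[unfolded id_def])

lemma matrix_of_endo_power: "matrix_of_endo (endo_of_matrix A ^ k) = mpow A k"
  by (induction k) (simp_all add: matrix_of_endo_one matrix_of_endo_mult)

lemma bounded_linear_matrix_of_endo: "bounded_linear (matrix_of_endo :: (real^'n) endo \<Rightarrow> _)"
proof (rule bounded_linear_vec_lambda, rule bounded_linear_vec_lambda)
  fix i j :: 'n
  have "bounded_linear (\<lambda>L. blinfun_apply (Rep_endo L) (axis j 1) $ i)"
    by (intro bounded_linear_compose[OF bounded_linear_vec_nth]
        bounded_linear_compose[OF blinfun.bounded_linear_left] bounded_linear_Rep_endo)
  then show "bounded_linear (\<lambda>L. matrix_of_endo L $ i $ j)"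
    by (simp add: matrix_of_endo_def matrix_def)
qed

lemma sums_mexp_exp:
  "(\<lambda>k. (t ^ k / fact k) *\<^sub>R mpow A k) sums matrix_of_endo (exp (t *\<^sub>R endo_of_matrix A))"
proof -
  have "(\<lambda>k. matrix_of_endo ((t *\<^sub>R endo_of_matrix A) ^ k /\<^sub>R fact k)) sums
      matrix_of_endo (exp (t *\<^sub>R endo_of_matrix A))"
    by (rule bounded_linear.sums[OF bounded_linear_matrix_of_endo exp_converges])
  then show ?thesis
    by (simp add: linear_scale[OF bounded_linear.linear[OF bounded_linear_matrix_of_endo]]
        scaleR_power matrix_of_endo_power divide_inverse_commute)
qed

lemma mexp_eq_exp: "mexp A t = matrix_of_endo (exp (t *\<^sub>R endo_of_matrix A))"
  unfolding mexp_def by (rule sums_unique[OF sums_mexp_exp, symmetric])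

lemma sums_mexp: "(\<lambda>k. (t ^ k / fact k) *\<^sub>R mpow A k) sums mexp A t"
  using sums_mexp_exp by (simp add: mexp_eq_exp)

lemma mexp_0 [simp]: "mexp A 0 = mat 1"
  by (simp add: mexp_eq_exp matrix_of_endo_one)

lemma mexp_add: "mexp A (s + t) = mexp A s ** mexp A t"
  by (simp add: mexp_eq_exp exp_add_commuting scaleR_add_left matrix_of_endo_mult)

lemma mexp_minus_inverse: "mexp A t ** mexp A (- t) = mat 1"
  by (metis mexp_add mexp_0 add.right_inverse)

lemma has_vector_derivative_mexp:
  "(mexp A has_vector_derivative mexp A t ** A) (at t within T)"
proof -
  have "((\<lambda>t. matrix_of_endo (exp (t *\<^sub>R endo_of_matrix A))) has_vector_derivative
      matrix_of_endo (exp (t *\<^sub>R endo_of_matrix A) * endo_of_matrix A)) (at t within T)"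
    using bounded_linear.has_vector_derivative[OF bounded_linear_matrix_of_endo
        exp_scaleR_has_vector_derivative_right] .
  then show ?thesis
    by (simp add: mexp_eq_exp[abs_def] matrix_of_endo_mult)
qed

lemma continuous_on_mexp: "continuous_on S (mexp A)"
  using has_vector_derivative_mexp
  by (meson continuous_at_imp_continuous_on has_vector_derivative_continuous)

lemma mpow_commute: "mpow A k ** A = A ** mpow A k"
  by (induction k) (simp_all, metis matrix_mul_assoc)

lemma mpow_transpose: "transpose (mpow A k) = mpow (transpose A) k"
  by (induction k) (simp_all add: matrix_transpose_mul mpow_commute)

lemma mexp_transpose: "transpose (mexp A t) = mexp (transpose A) t"
proof -
  have "(\<lambda>k. transpose ((t ^ k / fact k) *\<^sub>R mpow A k)) sums transpose (mexp A t)"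
    by (rule bounded_linear.sums[OF bounded_linear_transpose sums_mexp])
  then have "(\<lambda>k. (t ^ k / fact k) *\<^sub>R mpow (transpose A) k) sums transpose (mexp A t)"
    by (simp add: linear_scale[OF bounded_linear.linear[OF bounded_linear_transpose]] mpow_transpose)
  then show ?thesis
    using sums_mexp sums_unique2 by blast
qed

section \<open>Trajectory and cost under a constant input\<close>

lemma has_vector_derivative_Zm:
  assumes "s \<in> {0..t}"
  shows "(Zm A has_vector_derivative mexp A (- s)) (at s within {0..t})"
proof -
  have "continuous_on {0..t} (\<lambda>s. mexp A (- s))"
    by (rule continuous_on_compose2[OF continuous_on_mexp[of UNIV]])
      (auto intro: continuous_intros)
  then show ?thesis
    unfolding Zm_def[abs_def] using assms by (rule integral_has_vector_derivative)
qed

lemma Zm_0 [simp]: "Zm A 0 = 0"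
  by (simp add: Zm_def)

lemma continuous_on_Zm: "continuous_on {0..t} (Zm A)"
  using has_vector_derivative_Zm
  by (meson continuous_on_eq_continuous_within has_vector_derivative_continuous)

lemma linear_ode_const_input_solution:
  fixes A :: "real^'n^'n" and B :: "real^'m^'n"
  assumes x0: "x 0 = x\<^sub>0"
    and ode: "\<And>t. t \<ge> 0 \<Longrightarrow> (x has_vector_derivative A *v x t + B *v u) (at t within {0..})"
    and t: "t \<ge> 0"
  shows "x t = mexp A t *v x\<^sub>0 + (mexp A t ** Zm A t ** B) *v u"
proof -
  define w where "w = B *v u"
  define y where "y s = mexp A (- s) *v x s - Zm A s *v w" for s
  have "(y has_vector_derivative 0) (at s within {0..t})" if s: "s \<in> {0..t}" for s
  proof -
    have "((mexp A \<circ> uminus) has_vector_derivative (-1) *\<^sub>R (mexp A (- s) ** A)) (at s within {0..t})"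
      by (rule vector_diff_chain_within) (auto intro!: derivative_eq_intros has_vector_derivative_mexp)
    then have "((\<lambda>s. mexp A (- s)) has_vector_derivative - (mexp A (- s) ** A)) (at s within {0..t})"
      by (simp add: o_def)
    moreover have "(x has_vector_derivative A *v x s + w) (at s within {0..t})"
      using ode[of s] s unfolding w_def by (auto intro: has_vector_derivative_within_subset)
    ultimately have "((\<lambda>s. mexp A (- s) *v x s) has_vector_derivative
        mexp A (- s) *v (A *v x s + w) + (- (mexp A (- s) ** A)) *v x s) (at s within {0..t})"
      by (rule bounded_bilinear.has_vector_derivative[OF bounded_bilinear_matrix_vector_mult])
    moreover have "((\<lambda>s. Zm A s *v w) has_vector_derivative mexp A (- s) *v w) (at s within {0..t})"
      using bounded_bilinear.has_vector_derivative[OF bounded_bilinear_matrix_vector_mult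
          has_vector_derivative_Zm[OF s] has_vector_derivative_const]
      by simp
    ultimately have "(y has_vector_derivative
        mexp A (- s) *v (A *v x s + w) + (- (mexp A (- s) ** A)) *v x s - mexp A (- s) *v w)
        (at s within {0..t})"
      unfolding y_def[abs_def] by (rule has_vector_derivative_diff)
    then show ?thesis
      by (simp add: algebra_simps matrix_vector_mul_assoc matrix_vector_mult_uminus_left)
  qed
  then obtain c where "\<And>s. s \<in> {0..t} \<Longrightarrow> y s = c"
    using has_vector_derivative_zero_constant[of "{0..t}" y] by auto
  then have "y t = y 0"
    using t by auto
  then have "mexp A (- t) *v x t = x\<^sub>0 + Zm A t *v w"
    by (simp add: y_def x0 algebra_simps)
  then have "mexp A t *v (mexp A (- t) *v x t) = mexp A t *v (x\<^sub>0 + Zm A t *v w)"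
    by simp
  then show ?thesis
    by (simp add: matrix_vector_mul_assoc matrix_mul_assoc mexp_minus_inverse algebra_simps w_def)
qed

lemma Jcost_eq_quadratic_H:
  fixes A :: "real^'n^'n" and B :: "real^'m^'n"
  assumes Q: "transpose Q = Q"
    and traj: "\<And>t. t \<in> {0..\<xi>} \<Longrightarrow> x t = mexp A t *v x\<^sub>0 + (mexp A t ** Zm A t ** B) *v u"
    and \<xi>: "0 \<le> \<xi>"
  shows "Jcost Q R x u \<xi>
    = x\<^sub>0 \<bullet> (H0 A Q \<xi> *v x\<^sub>0) + 2 * (x\<^sub>0 \<bullet> (H1 A B Q \<xi> *v u)) + u \<bullet> (H2 A B Q R \<xi> *v u)"
proof -
  define h0 where "h0 t = mexp (transpose A) t ** Q ** mexp A t" for t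
  define h1 where "h1 t = h0 t ** Zm A t ** B" for t
  define h2 where "h2 t = transpose (mexp A t ** Zm A t ** B) ** Q ** (mexp A t ** Zm A t ** B)" for t
  have continuous_h: "continuous_on {0..\<xi>} h0" "continuous_on {0..\<xi>} h1" "continuous_on {0..\<xi>} h2"
    unfolding h0_def h1_def h2_def
    by (intro bounded_bilinear.continuous_on[OF bounded_bilinear_matrix_mult]
        bounded_linear.continuous_on[OF bounded_linear_transpose]
        continuous_on_mexp continuous_on_Zm continuous_on_const)+
  have integrand: "x t \<bullet> (Q *v x t) + u \<bullet> (R *v u)
      = x\<^sub>0 \<bullet> (h0 t *v x\<^sub>0) + 2 * (x\<^sub>0 \<bullet> (h1 t *v u)) + u \<bullet> (h2 t *v u) + u \<bullet> (R *v u)"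
    if "t \<in> {0..\<xi>}" for t
  proof -
    define a where "a = mexp A t *v x\<^sub>0"
    define b where "b = (mexp A t ** Zm A t ** B) *v u"
    have "x\<^sub>0 \<bullet> (h0 t *v x\<^sub>0) = a \<bullet> (Q *v a)" "x\<^sub>0 \<bullet> (h1 t *v u) = a \<bullet> (Q *v b)"
      "u \<bullet> (h2 t *v u) = b \<bullet> (Q *v b)"
      by (simp_all add: h0_def h1_def h2_def a_def b_def mexp_transpose[symmetric]
          matrix_vector_mul_assoc[symmetric] inner_matrix_vector_transpose matrix_transpose_mul
          del: transpose_matrix_vector)
    then show ?thesis
      using traj[OF that] symmetric_quadratic_form_add[OF Q]
      by (simp add: a_def[symmetric] b_def[symmetric])
  qed
  have const: "((\<lambda>t. u \<bullet> (R *v u)) has_integral \<xi> * (u \<bullet> (R *v u))) {0..\<xi>}"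
    using has_integral_const_real[of "u \<bullet> (R *v u)" 0 \<xi>] \<xi> by simp
  have "((\<lambda>t. x\<^sub>0 \<bullet> (h0 t *v x\<^sub>0) + 2 * (x\<^sub>0 \<bullet> (h1 t *v u)) + u \<bullet> (h2 t *v u) + u \<bullet> (R *v u))
      has_integral x\<^sub>0 \<bullet> (integral {0..\<xi>} h0 *v x\<^sub>0) + 2 * (x\<^sub>0 \<bullet> (integral {0..\<xi>} h1 *v u))
        + u \<bullet> (integral {0..\<xi>} h2 *v u) + \<xi> * (u \<bullet> (R *v u))) {0..\<xi>}"
    by (intro has_integral_add has_integral_mult_right const
        has_integral_inner_matrix_vector continuous_h)
  then have "((\<lambda>t. x t \<bullet> (Q *v x t) + u \<bullet> (R *v u)) has_integral
      x\<^sub>0 \<bullet> (integral {0..\<xi>} h0 *v x\<^sub>0) + 2 * (x\<^sub>0 \<bullet> (integral {0..\<xi>} h1 *v u))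
        + u \<bullet> (integral {0..\<xi>} h2 *v u) + \<xi> * (u \<bullet> (R *v u))) {0..\<xi>}"
    by (rule has_integral_eq[rotated]) (simp add: integrand)
  also have "x\<^sub>0 \<bullet> (integral {0..\<xi>} h0 *v x\<^sub>0) + 2 * (x\<^sub>0 \<bullet> (integral {0..\<xi>} h1 *v u))
        + u \<bullet> (integral {0..\<xi>} h2 *v u) + \<xi> * (u \<bullet> (R *v u))
      = x\<^sub>0 \<bullet> (H0 A Q \<xi> *v x\<^sub>0) + 2 * (x\<^sub>0 \<bullet> (H1 A B Q \<xi> *v u)) + u \<bullet> (H2 A B Q R \<xi> *v u)"
    by (simp add: H0_def H1_def H2_def h0_def[symmetric] h1_def[symmetric] h2_def[symmetric]
        matrix_vector_mult_add_rdistrib inner_add_right scaleR_matrix_vector_assoc[symmetric])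
  finally show ?thesis
    unfolding Jcost_def by (rule integral_unique)
qed

lemma continuous_on_Jcost:
  assumes "continuous_on {0..b} x"
  shows "continuous_on {0..b} (Jcost Q R x u)"
proof -
  have "continuous_on {0..b} (\<lambda>t. x t \<bullet> (Q *v x t) + u \<bullet> (R *v u))"
    by (intro continuous_intros assms
        bounded_linear.continuous_on[OF matrix_vector_mul_bounded_linear])
  then show ?thesis
    unfolding Jcost_def[abs_def]
    by (rule indefinite_integral_continuous_1[OF integrable_continuous_interval])
qed

section \<open>Vectorisation\<close>

lemma inner_vecm: "vecm F \<bullet> vecm G = (\<Sum>i\<in>UNIV. F $ i \<bullet> G $ i)"
  unfolding inner_vec_def sum_UNIV_prod
  by (subst sum.swap) (simp add: vecm_def)

lemma matrix_mult_outer_row: "(C ** outer x) $ i = (C *v x) $ i *\<^sub>R x"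
  by (simp add: matrix_matrix_mult_def matrix_vector_mult_def outer_def vec_eq_iff
      sum_distrib_right mult.assoc)

lemma inner_vecm_mult_outer: "vecm (C ** outer x) \<bullet> vecm F = (C *v x) \<bullet> (F *v x)"
  by (simp add: inner_vecm matrix_mult_outer_row inner_vec_def[of "C *v x"]
      matrix_vector_mul_component inner_commute)

lemma kron_outer_vecm: "kron (outer x) M *v vecm F = vecm (M ** F ** outer x)"
proof -
  have "(\<Sum>b\<in>UNIV. \<Sum>d\<in>UNIV. x $ a * x $ b * M $ c $ d * F $ d $ b)
      = (\<Sum>b\<in>UNIV. (\<Sum>d\<in>UNIV. M $ c $ d * F $ d $ b) * (x $ b * x $ a))" for a c
    by (simp add: sum_distrib_left sum_distrib_right ac_simps)
  then show ?thesis
    by (simp add: vec_eq_iff matrix_vector_mult_def kron_def outer_def vecm_def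
        matrix_matrix_mult_def sum_UNIV_prod)
qed

lemma inner_vecm_kron_outer:
  "vecm F \<bullet> (kron (outer x) M *v vecm F) = (F *v x) \<bullet> (M *v (F *v x))"
  by (simp add: kron_outer_vecm inner_commute[of "vecm F"] inner_vecm_mult_outer
      matrix_vector_mul_assoc[symmetric] inner_commute[of "F *v x"])

lemma kron_rowv_mat1_vecm: "(kron (rowv x) (mat 1) *v vecm F) $ r = (F *v x) $ snd r"
proof -
  have "x $ a * (if snd r = b then 1 else 0) * F $ b $ a
      = (if snd r = b then F $ b $ a * x $ a else 0)" for a b
    by simp
  then show ?thesis
    by (simp add: matrix_vector_mult_def kron_def rowv_def vecm_def mat_def sum_UNIV_prod
        sum.delta)
qed

lemma vecm_scaleR: "vecm (r *\<^sub>R M) = r *\<^sub>R vecm M"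
  by (simp add: vecm_def vec_eq_iff)

lemma nnz_mat_eq_nnz_vecm: "nnz_mat F = nnz_vec (vecm F)"
proof -
  have "{p. vecm F $ p \<noteq> 0} = prod.swap ` {(i, j). F $ i $ j \<noteq> 0}"
    by (auto simp: vecm_def image_iff)
  then show ?thesis
    unfolding nnz_mat_def nnz_vec_def by (simp add: card_image)
qed

lemma nnz_vec_kron_rowv_mat1: "nnz_vec (kron (rowv x) (mat 1) *v vecm F) = nnz_vec (F *v x)"
proof -
  have "{r. (kron (rowv x) (mat 1) *v vecm F) $ r \<noteq> 0}
      = (UNIV :: 1 set) \<times> {i. (F *v x) $ i \<noteq> 0}"
    by (auto simp: kron_rowv_mat1_vecm)
  then show ?thesis
    unfolding nnz_vec_def by (simp add: card_cartesian_product)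
qed

section \<open>The reformulated constraint\<close>

lemma quadratic_P1m_eq_cost_margin:
  fixes A :: "real^'n^'n" and B :: "real^'m^'n" and F :: "real^'n^'m"
  assumes Q: "transpose Q = Q" and Pt: "transpose Pt = Pt"
    and traj: "\<And>t. t \<in> {0..\<xi>} \<Longrightarrow> x t = mexp A t *v xk + (mexp A t ** Zm A t ** B) *v (F *v xk)"
    and \<xi>: "0 \<le> \<xi>"
  shows "(1/2) * (vecm F \<bullet> (P1m A B Q R Pt \<alpha> xk \<xi> *v vecm F)) + q1v A B Q Pt \<alpha> xk \<xi> \<bullet> vecm F
      + r1 A Q Pt \<alpha> xk \<xi>
    = Jcost Q R x (F *v xk) \<xi> - \<alpha> * (xk \<bullet> (Pt *v xk) - x \<xi> \<bullet> (Pt *v x \<xi>))"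
proof -
  define u where "u = F *v xk"
  define E where "E = mexp A \<xi>"
  define G where "G = E ** Zm A \<xi> ** B"
  define a where "a = E *v xk"
  define b where "b = G *v u"
  have E_transpose: "mexp (transpose A) \<xi> = transpose E"
    by (simp add: E_def mexp_transpose)
  have G_transpose: "transpose B ** transpose (Zm A \<xi>) ** transpose E = transpose G"
    by (simp add: G_def matrix_transpose_mul matrix_mul_assoc)
  have G_apply: "G *v v = E *v (Zm A \<xi> *v (B *v v))" for v
    by (simp add: G_def matrix_vector_mul_assoc matrix_mul_assoc)
  have "(1/2) * (vecm F \<bullet> (P1m A B Q R Pt \<alpha> xk \<xi> *v vecm F))
      = u \<bullet> (H2 A B Q R \<xi> *v u) + \<alpha> * (b \<bullet> (Pt *v b))"
    by (simp add: P1m_def E_transpose G_transpose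
        u_def[symmetric] E_def[symmetric] G_def[symmetric]
        b_def G_apply inner_vecm_kron_outer scaleR_matrix_vector_assoc[symmetric]
        matrix_vector_mult_add_rdistrib inner_add_right matrix_vector_mul_assoc[symmetric]
        inner_matrix_vector_transpose
        del: transpose_matrix_vector)
  moreover have "q1v A B Q Pt \<alpha> xk \<xi> \<bullet> vecm F
      = 2 * (xk \<bullet> (H1 A B Q \<xi> *v u)) + 2 * \<alpha> * (a \<bullet> (Pt *v b))"
    by (simp add: q1v_def E_transpose G_transpose
        u_def[symmetric] E_def[symmetric] G_def[symmetric]
        a_def b_def G_apply vecm_scaleR inner_vecm_mult_outer matrix_vector_mult_add_rdistrib
        inner_add_left
        scaleR_matrix_vector_assoc[symmetric] matrix_vector_mul_assoc[symmetric]
        inner_transpose_matrix_vector symmetric_matrix_inner_commute[OF Pt]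
        del: transpose_matrix_vector)
  moreover have "r1 A Q Pt \<alpha> xk \<xi> = xk \<bullet> (H0 A Q \<xi> *v xk) + \<alpha> * (a \<bullet> (Pt *v a) - xk \<bullet> (Pt *v xk))"
    by (simp add: r1_def E_transpose E_def[symmetric] a_def matrix_vector_mult_add_rdistrib
        matrix_vector_mult_diff_rdistrib inner_add_right inner_diff_right
        scaleR_matrix_vector_assoc[symmetric] matrix_vector_mul_assoc[symmetric]
        inner_matrix_vector_transpose
        del: transpose_matrix_vector)
  moreover have "x \<xi> \<bullet> (Pt *v x \<xi>) = a \<bullet> (Pt *v a) + 2 * (a \<bullet> (Pt *v b)) + b \<bullet> (Pt *v b)"
    using traj[of \<xi>] \<xi> symmetric_quadratic_form_add[OF Pt]
    by (simp add: a_def b_def u_def E_def G_def)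
  ultimately show ?thesis
    using Jcost_eq_quadratic_H[OF Q traj \<xi>] by (simp add: u_def algebra_simps)
qed

theorem theorem3:
  fixes A :: "real^'n^'n" and B :: "real^'m^'n" and Q :: "real^'n^'n" and R :: "real^'m^'m"
    and Ft :: "real^'n^'m" and Pt :: "real^'n^'n"
    and \<alpha> \<gamma> \<eta> :: real and xk :: "real^'n"
    and xtraj :: "real^'n^'m \<Rightarrow> real \<Rightarrow> real^'n"
  assumes stab: "stabilizable A B"
    and Q: "pos_def Q" and R: "pos_def R"
    and \<alpha>: "\<alpha> > 1" and \<gamma>: "\<gamma> \<ge> 0" and \<eta>: "\<eta> \<ge> 0"
    and Ft: "hurwitz (A + B ** Ft)"
    and Pt: "pos_def Pt"
    and lyap: "transpose (A + B ** Ft) ** Pt + Pt ** (A + B ** Ft) + Q + transpose Ft ** R ** Ft = 0"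
    and traj0: "\<And>F. xtraj F 0 = xk"
    and trajODE: "\<And>F t. t \<ge> 0 \<Longrightarrow>
        (xtraj F has_vector_derivative (A *v xtraj F t + B *v (F *v xk))) (at t within {0..})"
  shows "\<forall>(F::real^'n^'m) (\<delta>::real).
      ((\<forall>\<xi>\<in>{0..\<delta>}. Jcost Q R (xtraj F) (F *v xk) \<xi>
            \<le> \<alpha> * (xk \<bullet> (Pt *v xk) - xtraj F \<xi> \<bullet> (Pt *v xtraj F \<xi>)))
       \<longleftrightarrow>
       (\<forall>\<xi>\<in>{0..<\<delta>}. (1/2) * (vecm F \<bullet> (P1m A B Q R Pt \<alpha> xk \<xi> *v vecm F))
            + q1v A B Q Pt \<alpha> xk \<xi> \<bullet> vecm F + r1 A Q Pt \<alpha> xk \<xi> \<le> 0))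
    \<and> (- \<delta> + \<gamma> * real (nnz_mat F) + \<eta> * real (nnz_vec (F *v xk))
       = - \<delta> + \<gamma> * real (nnz_vec (vecm F)) + \<eta> * real (nnz_vec (kron (rowv xk) (mat 1) *v vecm F)))"
proof (intro allI conjI)
  fix F :: "real^'n^'m" and \<delta> :: real
  show "- \<delta> + \<gamma> * real (nnz_mat F) + \<eta> * real (nnz_vec (F *v xk))
      = - \<delta> + \<gamma> * real (nnz_vec (vecm F)) + \<eta> * real (nnz_vec (kron (rowv xk) (mat 1) *v vecm F))"
    by (simp add: nnz_mat_eq_nnz_vecm nnz_vec_kron_rowv_mat1)
  define margin where "margin \<xi> = Jcost Q R (xtraj F) (F *v xk) \<xi>
    - \<alpha> * (xk \<bullet> (Pt *v xk) - xtraj F \<xi> \<bullet> (Pt *v xtraj F \<xi>))" for \<xi>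
  have traj: "\<And>t. t \<ge> 0 \<Longrightarrow> xtraj F t = mexp A t *v xk + (mexp A t ** Zm A t ** B) *v (F *v xk)"
    by (rule linear_ode_const_input_solution[OF traj0 trajODE])
  have "continuous_on {0..\<delta>} (xtraj F)"
    using trajODE by (rule continuous_on_if_has_vector_derivative)
  then have "continuous_on {0..\<delta>} margin"
    unfolding margin_def
    by (intro continuous_intros continuous_on_Jcost
        bounded_linear.continuous_on[OF matrix_vector_mul_bounded_linear])
  moreover have "margin 0 = 0"
    by (simp add: margin_def Jcost_def traj0)
  moreover have "(1/2) * (vecm F \<bullet> (P1m A B Q R Pt \<alpha> xk \<xi> *v vecm F)) + q1v A B Q Pt \<alpha> xk \<xi> \<bullet> vecm F
      + r1 A Q Pt \<alpha> xk \<xi> = margin \<xi>" if "\<xi> \<in> {0..<\<delta>}" for \<xi>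
    using Q Pt that unfolding margin_def pos_def_def
    by (intro quadratic_P1m_eq_cost_margin traj) auto
  ultimately show "(\<forall>\<xi>\<in>{0..\<delta>}. Jcost Q R (xtraj F) (F *v xk) \<xi>
        \<le> \<alpha> * (xk \<bullet> (Pt *v xk) - xtraj F \<xi> \<bullet> (Pt *v xtraj F \<xi>)))
      \<longleftrightarrow> (\<forall>\<xi>\<in>{0..<\<delta>}. (1/2) * (vecm F \<bullet> (P1m A B Q R Pt \<alpha> xk \<xi> *v vecm F))
        + q1v A B Q Pt \<alpha> xk \<xi> \<bullet> vecm F + r1 A Q Pt \<alpha> xk \<xi> \<le> 0)"
    using nonpos_on_atLeastAtMost_iff_atLeastLessThan[of 0 \<delta> margin]
    by (simp add: margin_def)
qed

end
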